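(* Let $K\subseteq\mathcal I_{int}$ be finite and let $A$ be an NFA over the alphabet $2^{\Sigma\cup K\cup\{\mathsf{anch}\}}$ whose language $L(A)$ consists of $K$-interval words over $\Sigma$. Then one can construct a $\mathsf{PnEMTL}$ formula $\phi$ over $\Sigma$ such that for every timed word $\rho$ over $\Sigma$ and every $i\in dom(\rho)$: $\rho,i\models\phi$ if and only if $(\rho,i)\in\mathsf{Time}(L(A))$.
   Context: Fix a finite set $\Sigma$ of propositions. A timed word over $\Sigma$ is a finite sequence $\rho=(\sigma_1,\tau_1)\cdots(\sigma_n,\tau_n)$ with $\emptyset\neq\sigma_i\subseteq\Sigma$, $\tau_i\in\mathbb R_{\ge0}$, $\tau_1=0$, $\tau_i\le\tau_j$ for $i\le j$; $dom(\rho)=\{1,\dots,n\}$; a pointed timed word is a pair $(\rho,i)$ with $i\in dom(\rho)$. $\mathcal I_{int}$ is the set of open, half-open or closed real intervals with endpoints in $\mathbb Z\cup\{-\infty,\infty\}$. Interval words: let $K\subseteq\mathcal I_{int}$ be finite and $\mathsf{anch}$ a fresh symbol. A $K$-interval word over $\Sigma$ is a finite word $\kappa=a_1\cdots a_n$ with $a_j\subseteq\Sigma\cup K\cup\{\mathsf{anch}\}$ such that exactly one position $i$, denoted $\mathsf{anch}(\kappa)$, has $\mathsf{anch}\in a_i$, and $a_i\subseteq\Sigma\cup\{\mathsf{anch}\}$ there. A pointed timed word $(\rho,i)$ with $\rho=(\sigma_1,\tau_1)\cdots(\sigma_m,\tau_m)$ is consistent with $\kappa$ iff $m=n$, $i=\mathsf{anch}(\kappa)$,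 $\sigma_j=a_j\cap\Sigma$ for all $j$, and $\tau_j-\tau_i\in I$ for all $j\neq i$ and all $I\in a_j\cap K$. $\mathsf{Time}(\kappa)$ is the set of pointed timed words consistent with $\kappa$, and $\mathsf{Time}(\Omega)=\bigcup_{\kappa\in\Omega}\mathsf{Time}(\kappa)$. $\mathsf{PnEMTL}$: formulae $\varphi::=a\mid\varphi\wedge\varphi\mid\neg\varphi\mid\mathcal F^k_{I_1,\dots,I_k}(\mathsf A_1,\dots,\mathsf A_{k+1})(S)\mid\mathcal P^k_{I_1,\dots,I_k}(\mathsf A_1,\dots,\mathsf A_{k+1})(S)$, where $a\in\Sigma$, $k\ge1$, $I_1,\dots,I_k\in\mathcal I_{int}$, $S$ is a finite set of $\mathsf{PnEMTL}$ formulae and $\mathsf A_1,\dots,\mathsf A_{k+1}$ are finite automata over the alphabet $2^S$. For a timed word $\rho$ of length $n$ and position $j$ let $S_j=\{\theta\in S:\rho,j\models\theta\}$; for $x\le y$, $\mathsf{Seg}^+(\rho,x,y,S)=S_xS_{x+1}\cdots S_y$ and $\mathsf{Seg}^-(\rho,y,x,S)=S_yS_{y-1}\cdots S_x$. Then $\rho,i_0\models\mathcal F^k_{I_1,\dots,I_k}(\mathsf A_1,\dots,\mathsf A_{k+1})(S)$ iff there are $i_0\le i_1\le\dots\le i_k\le n$ with $\tau_{i_w}-\tau_{i_0}\in I_w$ and $\mathsf{Seg}^+(\rho,i_{w-1},i_w,S)\in L(\mathsf A_w)$ for all $1\le w\le k$, and $\mathsf{Seg}^+(\rho,i_k,n,S)\in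 L(\mathsf A_{k+1})$; $\rho,i_0\models\mathcal P^k_{I_1,\dots,I_k}(\mathsf A_1,\dots,\mathsf A_{k+1})(S)$ iff there are $i_0\ge i_1\ge\dots\ge i_k\ge1$ with $\tau_{i_0}-\tau_{i_w}\in I_w$ and $\mathsf{Seg}^-(\rho,i_{w-1},i_w,S)\in L(\mathsf A_w)$ for all $1\le w\le k$, and $\mathsf{Seg}^-(\rho,i_k,1,S)\in L(\mathsf A_{k+1})$. Propositions and Booleans are as usual. *)

theory Defs
  imports Complex_Main
begin

datatype ibound = Unb | Closed int | Open int

datatype intv = Intv ibound ibound  (* lower bound, upper bound; Unb = -\<infinity> resp. +\<infinity> *)

fun lower_ok :: "ibound \<Rightarrow> real \<Rightarrow> bool" where
  "lower_ok Unb x = True"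
| "lower_ok (Closed a) x = (real_of_int a \<le> x)"
| "lower_ok (Open a) x = (real_of_int a < x)"

fun upper_ok :: "ibound \<Rightarrow> real \<Rightarrow> bool" where
  "upper_ok Unb x = True"
| "upper_ok (Closed b) x = (x \<le> real_of_int b)"
| "upper_ok (Open b) x = (x < real_of_int b)"

fun in_intv :: "real \<Rightarrow> intv \<Rightarrow> bool" where
  "in_intv x (Intv l u) = (lower_ok l x \<and> upper_ok u x)"

section \<open>Timed words (positions are 1-based, as in the paper)\<close>

type_synonym 'a tword = "('a set \<times> real) list"

definition sig :: "'a tword \<Rightarrow> nat \<Rightarrow> 'a set" where
  "sig \<rho> j = fst (\<rho> ! (j - 1))"

definition tau :: "'a tword \<Rightarrow> nat \<Rightarrow> real" where
  "tau \<rho> j = snd (\<rho> ! (j - 1))"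

definition dom_tw :: "'a tword \<Rightarrow> nat set" where
  "dom_tw \<rho> = {1..length \<rho>}"

definition timed_word :: "'a set \<Rightarrow> 'a tword \<Rightarrow> bool" where
  "timed_word Sig \<rho> \<longleftrightarrow> \<rho> \<noteq> [] \<and>
     (\<forall>j\<in>dom_tw \<rho>. sig \<rho> j \<noteq> {} \<and> sig \<rho> j \<subseteq> Sig) \<and>
     tau \<rho> 1 = 0 \<and>
     (\<forall>i\<in>dom_tw \<rho>. \<forall>j\<in>dom_tw \<rho>. i \<le> j \<longrightarrow> tau \<rho> i \<le> tau \<rho> j)"

record ('q, 'b) nfa =
  init :: "'q set"
  final :: "'q set"
  trans :: "('q \<times> 'b \<times> 'q) set"

definition nfa_wf :: "'b set \<Rightarrow> ('q, 'b) nfa \<Rightarrow> bool" where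
  "nfa_wf Alph A \<longleftrightarrow> finite (init A) \<and> finite (final A) \<and> finite (trans A) \<and>
     (\<forall>(p, b, q)\<in>trans A. b \<in> Alph)"

inductive path :: "('q, 'b) nfa \<Rightarrow> 'q \<Rightarrow> 'b list \<Rightarrow> 'q \<Rightarrow> bool" for A where
  path_nil: "path A p [] p"
| path_cons: "(p, b, q) \<in> trans A \<Longrightarrow> path A q w r \<Longrightarrow> path A p (b # w) r"

definition lang :: "('q, 'b) nfa \<Rightarrow> 'b list set" where
  "lang A = {w. \<exists>p\<in>init A. \<exists>q\<in>final A. path A p w q}"

datatype 'a isym = IProp 'a | IItv intv | Anch

definition is_anchor :: "'a isym set list \<Rightarrow> nat \<Rightarrow> bool" where
  "is_anchor \<kappa> i \<longleftrightarrow> i \<in> {1..length \<kappa>} \<and> Anch \<in> \<kappa> ! (i - 1)"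

definition interval_word :: "'a set \<Rightarrow> intv set \<Rightarrow> 'a isym set list \<Rightarrow> bool" where
  "interval_word Sig K \<kappa> \<longleftrightarrow>
     (\<forall>a\<in>set \<kappa>. a \<subseteq> IProp ` Sig \<union> IItv ` K \<union> {Anch}) \<and>
     (\<exists>!i. is_anchor \<kappa> i) \<and>
     (\<forall>i. is_anchor \<kappa> i \<longrightarrow> \<kappa> ! (i - 1) \<subseteq> IProp ` Sig \<union> {Anch})"

definition anch_pos :: "'a isym set list \<Rightarrow> nat" where
  "anch_pos \<kappa> = (THE i. is_anchor \<kappa> i)"

definition consistent :: "intv set \<Rightarrow> 'a tword \<Rightarrow> nat \<Rightarrow> 'a isym set list \<Rightarrow> bool" where
  "consistent K \<rho> i \<kappa> \<longleftrightarrow> length \<rho> = length \<kappa> \<and> i = anch_pos \<kappa> \<and>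
     (\<forall>j\<in>dom_tw \<rho>. sig \<rho> j = {a. IProp a \<in> \<kappa> ! (j - 1)}) \<and>
     (\<forall>j\<in>dom_tw \<rho>. j \<noteq> i \<longrightarrow>
        (\<forall>I\<in>K. IItv I \<in> \<kappa> ! (j - 1) \<longrightarrow> in_intv (tau \<rho> j - tau \<rho> i) I))"

definition Time :: "intv set \<Rightarrow> 'a isym set list set \<Rightarrow> ('a tword \<times> nat) set" where
  "Time K \<Omega> = {(\<rho>, i). \<exists>\<kappa>\<in>\<Omega>. consistent K \<rho> i \<kappa>}"

(* The finite set S of subformulas is given as a list; the automata read letters
   that are subsets of {0..<length S}, a letter X standing for {S!m | m \<in> X} \<subseteq> S. *)
datatype 'a fm =
    FProp 'a
  | FAnd "'a fm" "'a fm"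
  | FNeg "'a fm"
  | FFut "intv list" "(nat, nat set) nfa list" "'a fm list"
  | FPast "intv list" "(nat, nat set) nfa list" "'a fm list"

definition segp :: "(nat \<Rightarrow> 'b) \<Rightarrow> nat \<Rightarrow> nat \<Rightarrow> 'b list" where
  "segp L x y = map L [x..<Suc y]"

definition segm :: "(nat \<Rightarrow> 'b) \<Rightarrow> nat \<Rightarrow> nat \<Rightarrow> 'b list" where
  "segm L y x = map L (rev [x..<Suc y])"

definition fut_sem :: "intv list \<Rightarrow> (nat, nat set) nfa list \<Rightarrow> (nat \<Rightarrow> nat set)
    \<Rightarrow> 'a tword \<Rightarrow> nat \<Rightarrow> bool" where
  "fut_sem Is As L \<rho> i0 \<longleftrightarrow> (let k = length Is; n = length \<rho> in
     \<exists>ix :: nat \<Rightarrow> nat. ix 0 = i0 \<and> (\<forall>w<k. ix w \<le> ix (Suc w)) \<and> ix k \<le> n \<and>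
       (\<forall>w\<in>{1..k}. in_intv (tau \<rho> (ix w) - tau \<rho> i0) (Is ! (w - 1)) \<and>
                    segp L (ix (w - 1)) (ix w) \<in> lang (As ! (w - 1))) \<and>
       segp L (ix k) n \<in> lang (As ! k))"

definition past_sem :: "intv list \<Rightarrow> (nat, nat set) nfa list \<Rightarrow> (nat \<Rightarrow> nat set)
    \<Rightarrow> 'a tword \<Rightarrow> nat \<Rightarrow> bool" where
  "past_sem Is As L \<rho> i0 \<longleftrightarrow> (let k = length Is in
     \<exists>ix :: nat \<Rightarrow> nat. ix 0 = i0 \<and> (\<forall>w<k. ix (Suc w) \<le> ix w) \<and> 1 \<le> ix k \<and>
       (\<forall>w\<in>{1..k}. in_intv (tau \<rho> i0 - tau \<rho> (ix w)) (Is ! (w - 1)) \<and>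
                    segm L (ix (w - 1)) (ix w) \<in> lang (As ! (w - 1))) \<and>
       segm L (ix k) 1 \<in> lang (As ! k))"

primrec sat :: "'a fm \<Rightarrow> 'a tword \<Rightarrow> nat \<Rightarrow> bool" where
  "sat (FProp a) \<rho> i = (a \<in> sig \<rho> i)"
| "sat (FAnd \<phi> \<psi>) \<rho> i = (sat \<phi> \<rho> i \<and> sat \<psi> \<rho> i)"
| "sat (FNeg \<phi>) \<rho> i = (\<not> sat \<phi> \<rho> i)"
| "sat (FFut Is As S) \<rho> i = (let vs = map sat S in
     fut_sem Is As (\<lambda>j. {m. m < length S \<and> (vs ! m) \<rho> j}) \<rho> i)"
| "sat (FPast Is As S) \<rho> i = (let vs = map sat S in
     past_sem Is As (\<lambda>j. {m. m < length S \<and> (vs ! m) \<rho> j}) \<rho> i)"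

primrec wf_fm :: "'a set \<Rightarrow> 'a fm \<Rightarrow> bool" where
  "wf_fm Sig (FProp a) = (a \<in> Sig)"
| "wf_fm Sig (FAnd \<phi> \<psi>) = (wf_fm Sig \<phi> \<and> wf_fm Sig \<psi>)"
| "wf_fm Sig (FNeg \<phi>) = wf_fm Sig \<phi>"
| "wf_fm Sig (FFut Is As S) = (1 \<le> length Is \<and> length As = Suc (length Is) \<and>
     (\<forall>A\<in>set As. nfa_wf (Pow {..<length S}) A) \<and> list_all id (map (wf_fm Sig) S))"
| "wf_fm Sig (FPast Is As S) = (1 \<le> length Is \<and> length As = Suc (length Is) \<and>
     (\<forall>A\<in>set As. nfa_wf (Pow {..<length S}) A) \<and> list_all id (map (wf_fm Sig) S))"

end

theory Submission
  imports Defs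
begin

text \<open>
  An accepting run of \<open>A\<close> on an interval word consistent with \<open>(\<rho>, i)\<close> splits at the anchor
  into a run on the positions after \<open>i\<close> and, read backwards, one on the positions before \<open>i\<close>.
  Call the set of intervals \<open>I \<in> K\<close> containing \<open>\<tau>\<^sub>j - \<tau>\<^sub>i\<close> the type of \<open>j\<close>. Since \<open>\<tau>\<close> is
  monotone and intervals are convex, every interval enters and leaves the type at most once, so
  the future run splits into at most \<open>2|K| + 1\<close> blocks of constant type \<open>T\<close>. A future modality
  can guess the block boundaries, check the intervals of \<open>T\<close> at both ends of each block (convexity
  covers the inside) and run an automaton simulating \<open>A\<close> on the block, whose letters may only
  mention intervals of \<open>T\<close>. The past is symmetric, and the formula is the finite disjunction over
  all guesses of anchor transition and blocks.
\<close>

lemma in_intv_convex: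
  assumes "in_intv x I" "in_intv z I" "x \<le> y" "y \<le> z"
  shows "in_intv y I"
  using assms by (cases I; rename_tac l u; case_tac l; case_tac u) auto

fun neg_bound :: "ibound \<Rightarrow> ibound" where
  "neg_bound Unb = Unb"
| "neg_bound (Closed a) = Closed (- a)"
| "neg_bound (Open a) = Open (- a)"

fun neg_intv :: "intv \<Rightarrow> intv" where
  "neg_intv (Intv l u) = Intv (neg_bound u) (neg_bound l)"

lemma in_intv_neg_intv: "in_intv (- x) (neg_intv I) \<longleftrightarrow> in_intv x I"
  by (cases I; rename_tac l u; case_tac l; case_tac u) auto

abbreviation univ_intv :: intv where
  "univ_intv \<equiv> Intv Unb Unb"

section \<open>Runs of finite automata\<close>

inductive_simps path_Nil_iff [simp]: "path M p [] q"
inductive_simps path_Cons_iff [simp]: "path M p (b # w) q"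

lemma path_append: "path M p (u @ v) r \<longleftrightarrow> (\<exists>q. path M p u q \<and> path M q v r)"
  by (induction u arbitrary: p) auto

definition nfa_states :: "('q, 'b) nfa \<Rightarrow> 'q set" where
  "nfa_states M = init M \<union> final M \<union> fst ` trans M \<union> (\<lambda>(p, b, q). q) ` trans M"

lemma finite_nfa_states: "nfa_wf Al M \<Longrightarrow> finite (nfa_states M)"
  unfolding nfa_wf_def nfa_states_def by auto

lemma trans_nfa_states:
  "(p, b, q) \<in> trans M \<Longrightarrow> p \<in> nfa_states M \<and> q \<in> nfa_states M"
  unfolding nfa_states_def by force

lemma path_nfa_states: "path M p w q \<Longrightarrow> p \<in> nfa_states M \<Longrightarrow> q \<in> nfa_states M"
  by (induction rule: path.induct) (auto dest: trans_nfa_states)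

definition rev_nfa :: "('q, 'b) nfa \<Rightarrow> ('q, 'b) nfa" where
  "rev_nfa M = \<lparr>init = final M, final = init M, trans = (\<lambda>(p, b, q). (q, b, p)) ` trans M\<rparr>"

lemma trans_rev_nfa: "(q, b, p) \<in> trans (rev_nfa M) \<longleftrightarrow> (p, b, q) \<in> trans M"
  unfolding rev_nfa_def by force

lemma path_rev_nfa: "path (rev_nfa M) q (rev w) p \<longleftrightarrow> path M p w q"
  by (induction w arbitrary: p q) (auto simp: path_append trans_rev_nfa)

lemma nfa_states_rev_nfa: "nfa_states (rev_nfa M) = nfa_states M"
  unfolding nfa_states_def rev_nfa_def by force

lemma nfa_wf_rev_nfa: "nfa_wf Al M \<Longrightarrow> nfa_wf Al (rev_nfa M)"
  unfolding nfa_wf_def rev_nfa_def by auto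

definition rename_nfa :: "('q \<Rightarrow> 'r) \<Rightarrow> ('q, 'b) nfa \<Rightarrow> ('r, 'b) nfa" where
  "rename_nfa f M = \<lparr>init = f ` init M, final = f ` final M,
     trans = (\<lambda>(p, b, q). (f p, b, f q)) ` trans M\<rparr>"

lemma path_rename_nfa: "path M p w q \<Longrightarrow> path (rename_nfa f M) (f p) w (f q)"
proof (induction rule: path.induct)
  case (path_cons p b q w r)
  then have "(f p, b, f q) \<in> trans (rename_nfa f M)" by (force simp: rename_nfa_def)
  with path_cons show ?case by auto
qed simp

lemma path_rename_nfaD:
  assumes "path (rename_nfa f M) x w y" "inj_on f (nfa_states M)" "p \<in> nfa_states M" "f p = x"
  shows "\<exists>q. y = f q \<and> path M p w q"
  using assms
proof (induction arbitrary: p rule: path.induct)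
  case (path_cons x b z w y)
  then obtain p' q where t: "(p', b, q) \<in> trans M" "f p' = x" "z = f q"
    by (auto simp: rename_nfa_def)
  with path_cons.prems have "p' = p" by (metis inj_onD trans_nfa_states)
  with t path_cons.IH[of q] path_cons.prems(1) show ?case by (auto dest: trans_nfa_states)
qed auto

lemma lang_rename_nfa:
  assumes "inj_on f (nfa_states M)"
  shows "lang (rename_nfa f M) = lang M"
proof
  show "lang M \<subseteq> lang (rename_nfa f M)"
  proof
    fix w assume "w \<in> lang M"
    then obtain p q where "p \<in> init M" "q \<in> final M" "path M p w q"
      unfolding lang_def by blast
    moreover have "f p \<in> init (rename_nfa f M)" "f q \<in> final (rename_nfa f M)"
      using calculation by (auto simp: rename_nfa_def)
    ultimately show "w \<in> lang (rename_nfa f M)"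
      unfolding lang_def using path_rename_nfa[of M p w q f] by blast
  qed
  show "lang (rename_nfa f M) \<subseteq> lang M"
  proof
    fix w assume "w \<in> lang (rename_nfa f M)"
    then obtain p q' where pq: "p \<in> init M" "q' \<in> final M" "path (rename_nfa f M) (f p) w (f q')"
      unfolding lang_def rename_nfa_def by auto
    have states: "p \<in> nfa_states M" "q' \<in> nfa_states M"
      using pq(1,2) unfolding nfa_states_def by auto
    then obtain q where "f q' = f q" "path M p w q"
      using path_rename_nfaD[OF pq(3) assms] by blast
    moreover have "q = q'"
      using inj_onD[OF assms] path_nfa_states[OF \<open>path M p w q\<close> states(1)] states(2)
        \<open>f q' = f q\<close> by blast
    ultimately show "w \<in> lang M" using pq unfolding lang_def by blast
  qed
qed

lemma ex_nat_nfa: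
  fixes M :: "('q, 'b) nfa"
  assumes "nfa_wf Al M"
  shows "\<exists>M' :: (nat, 'b) nfa. nfa_wf Al M' \<and> lang M' = lang M"
proof -
  obtain f :: "'q \<Rightarrow> nat" where "inj_on f (nfa_states M)"
    using finite_imp_inj_to_nat_seg[OF finite_nfa_states[OF assms]] by blast
  moreover have "nfa_wf Al (rename_nfa f M)"
    using assms unfolding nfa_wf_def rename_nfa_def by auto
  ultimately show ?thesis using lang_rename_nfa by blast
qed

definition nat_nfa :: "'b set \<Rightarrow> ('q, 'b) nfa \<Rightarrow> (nat, 'b) nfa" where
  "nat_nfa Al M = (SOME M'. nfa_wf Al M' \<and> lang M' = lang M)"

lemma nfa_wf_nat_nfa: "nfa_wf Al M \<Longrightarrow> nfa_wf Al (nat_nfa Al M)"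
  unfolding nat_nfa_def using someI_ex[OF ex_nat_nfa] by blast

lemma lang_nat_nfa: "nfa_wf Al M \<Longrightarrow> lang (nat_nfa Al M) = lang M"
  unfolding nat_nfa_def using someI_ex[OF ex_nat_nfa] by blast

definition run_on :: "(nat \<Rightarrow> 'b \<Rightarrow> bool) \<Rightarrow> ('q, 'b) nfa \<Rightarrow> 'q \<Rightarrow> nat \<Rightarrow> nat \<Rightarrow> 'q \<Rightarrow> bool" where
  "run_on G M s p q s' \<longleftrightarrow> (\<exists>bs. list_all2 G [Suc p..<Suc q] bs \<and> path M s bs s')"

lemma run_on_refl: "run_on G M s p p s' \<longleftrightarrow> s = s'"
  unfolding run_on_def by auto

lemma run_on_Suc: "run_on G M s p (Suc p) s' \<longleftrightarrow> (\<exists>b. G (Suc p) b \<and> (s, b, s') \<in> trans M)"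
  unfolding run_on_def by (auto simp: list_all2_Cons1)

lemma upt_append_upt: "a \<le> b \<Longrightarrow> b \<le> c \<Longrightarrow> [a..<b] @ [b..<c] = [a..<c]"
  using upt_add_eq_append[of a b "c - b"] by simp

lemma run_on_split:
  assumes "p \<le> q" "q \<le> r"
  shows "run_on G M s p r s'' \<longleftrightarrow> (\<exists>s'. run_on G M s p q s' \<and> run_on G M s' q r s'')"
proof -
  have split: "[Suc p..<Suc r] = [Suc p..<Suc q] @ [Suc q..<Suc r]"
    using assms upt_append_upt[of "Suc p" "Suc q" "Suc r"] by (simp del: upt_Suc)
  show ?thesis
  proof
    assume "run_on G M s p r s''"
    then obtain us vs where "list_all2 G [Suc p..<Suc q] us" "list_all2 G [Suc q..<Suc r] vs"
        "path M s (us @ vs) s''"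
      unfolding run_on_def split list_all2_append1 by blast
    then show "\<exists>s'. run_on G M s p q s' \<and> run_on G M s' q r s''"
      unfolding run_on_def path_append by blast
  next
    assume "\<exists>s'. run_on G M s p q s' \<and> run_on G M s' q r s''"
    then obtain s' us vs where "list_all2 G [Suc p..<Suc q] us" "path M s us s'"
        "list_all2 G [Suc q..<Suc r] vs" "path M s' vs s''"
      unfolding run_on_def by blast
    then show "run_on G M s p r s''"
      unfolding run_on_def split by (blast intro: list_all2_appendI path_append[THEN iffD2])
  qed
qed

lemma run_on_mono:
  assumes "run_on G M s p q s'"
    and "\<And>j b. p < j \<Longrightarrow> j \<le> q \<Longrightarrow> G j b \<Longrightarrow> (\<exists>x y. (x, b, y) \<in> trans M) \<Longrightarrow> G' j b"
  shows "run_on G' M s p q s'"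
proof -
  obtain bs where bs: "list_all2 G [Suc p..<Suc q] bs" "path M s bs s'"
    using assms(1) unfolding run_on_def by blast
  have "\<forall>b\<in>set bs. \<exists>x y. (x, b, y) \<in> trans M"
    using bs(2) by (induction rule: path.induct) auto
  then have "list_all2 G' [Suc p..<Suc q] bs"
    using bs(1) assms(2) by (auto simp: list_all2_conv_all_nth simp del: upt_Suc)
  with bs(2) show ?thesis unfolding run_on_def by blast
qed

lemma run_on_cong:
  assumes "\<And>j b. p < j \<Longrightarrow> j \<le> q \<Longrightarrow> (\<exists>x y. (x, b, y) \<in> trans M) \<Longrightarrow> G j b \<longleftrightarrow> G' j b"
  shows "run_on G M s p q s' \<longleftrightarrow> run_on G' M s p q s'"
  using run_on_mono[of G M s p q s' G'] run_on_mono[of G' M s p q s' G] assms by blast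

lemma run_on_target_state:
  assumes "run_on G M s p q s'" "p < q"
  shows "s' \<in> nfa_states M"
proof -
  obtain s'' where "run_on G M s'' (q - 1) q s'"
    using assms run_on_split[of p "q - 1" q G M s s'] by auto
  then obtain b where "(s'', b, s') \<in> trans M"
    using assms(2) run_on_Suc[of G M s'' "q - 1" s'] by auto
  then show ?thesis by (rule conjunct2[OF trans_nfa_states])
qed

lemma rev_upt_reflect:
  assumes "b \<le> Suc c"
  shows "rev [a..<b] = map (\<lambda>j. c - j) [Suc c - b..<Suc c - a]"
proof (rule nth_equalityI)
  fix k assume "k < length (rev [a..<b])"
  then show "rev [a..<b] ! k = map (\<lambda>j. c - j) [Suc c - b..<Suc c - a] ! k"
    using assms by (simp add: rev_nth)
qed (use assms in simp)

lemma run_on_reflect: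
  assumes "p \<le> q" "q \<le> m"
  shows "run_on G M s p q s' \<longleftrightarrow> run_on (\<lambda>j. G (Suc m - j)) (rev_nfa M) s' (m - q) (m - p) s"
proof -
  have "rev [Suc p..<Suc q] = map (\<lambda>j. Suc m - j) [Suc (m - q)..<Suc (m - p)]"
    using rev_upt_reflect[of "Suc q" "Suc m" "Suc p"] assms by (simp add: Suc_diff_le)
  then have "list_all2 G [Suc p..<Suc q] bs \<longleftrightarrow>
      list_all2 (\<lambda>j. G (Suc m - j)) [Suc (m - q)..<Suc (m - p)] (rev bs)" for bs
    by (metis list_all2_map1 list_all2_rev)
  then show ?thesis
    unfolding run_on_def by (metis path_rev_nfa rev_rev_ident)
qed

definition letter_nfa :: "'b set \<Rightarrow> ('b \<Rightarrow> bool) \<Rightarrow> (nat, 'b) nfa" where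
  "letter_nfa Al P = \<lparr>init = {0}, final = {1}, trans = {(0, c, 1) | c. c \<in> Al \<and> P c}\<rparr>"

definition two_letter_nfa :: "'b set \<Rightarrow> (nat, 'b) nfa" where
  "two_letter_nfa Al = \<lparr>init = {0}, final = {2}, trans = {(k, c, Suc k) | k c. k < 2 \<and> c \<in> Al}\<rparr>"

definition relabel_nfa :: "'c set \<Rightarrow> ('c \<Rightarrow> 'b \<Rightarrow> bool) \<Rightarrow> ('q, 'b) nfa \<Rightarrow> 'q \<Rightarrow> 'q \<Rightarrow> ('q, 'c) nfa" where
  "relabel_nfa Al R M s s' = \<lparr>init = {s}, final = {s'},
     trans = {(p, c, q) | p c q. c \<in> Al \<and> (\<exists>b. (p, b, q) \<in> trans M \<and> R c b)}\<rparr>"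

lemma lang_letter_nfa: "lang (letter_nfa Al P) = {[c] | c. c \<in> Al \<and> P c}"
proof -
  have "path (letter_nfa Al P) 0 w 1 \<longleftrightarrow> (\<exists>c. w = [c] \<and> c \<in> Al \<and> P c)" for w
    by (cases w; cases "tl w") (auto simp: letter_nfa_def)
  then show ?thesis unfolding lang_def by (auto simp: letter_nfa_def)
qed

lemma lang_two_letter_nfa: "lang (two_letter_nfa Al) = {[c, c'] | c c'. c \<in> Al \<and> c' \<in> Al}"
proof -
  have "path (two_letter_nfa Al) 0 w 2 \<longleftrightarrow> (\<exists>c c'. w = [c, c'] \<and> c \<in> Al \<and> c' \<in> Al)" for w
    by (cases w; cases "tl w"; cases "tl (tl w)") (auto simp: two_letter_nfa_def)
  then show ?thesis unfolding lang_def by (auto simp: two_letter_nfa_def)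
qed

lemma path_relabel_nfa:
  "path (relabel_nfa Al R M s s') p w q \<longleftrightarrow>
     w \<in> lists Al \<and> (\<exists>bs. list_all2 R w bs \<and> path M p bs q)"
  by (induction w arbitrary: p) (fastforce simp: relabel_nfa_def list_all2_Cons1)+

lemma lang_relabel_nfa:
  "lang (relabel_nfa Al R M s s') = {w \<in> lists Al. \<exists>bs. list_all2 R w bs \<and> path M s bs s'}"
  unfolding lang_def path_relabel_nfa by (auto simp: relabel_nfa_def)

lemma nfa_wf_letter_nfa: "finite Al \<Longrightarrow> nfa_wf Al (letter_nfa Al P)"
  unfolding nfa_wf_def letter_nfa_def
  by (auto intro: finite_subset[of _ "(\<lambda>c. (0, c, 1)) ` Al"])

lemma nfa_wf_two_letter_nfa: "finite Al \<Longrightarrow> nfa_wf Al (two_letter_nfa Al)"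
  unfolding nfa_wf_def two_letter_nfa_def
  by (auto intro: finite_subset[of _ "(\<lambda>(k, c). (k, c, Suc k)) ` ({..<2} \<times> Al)"])

lemma nfa_wf_relabel_nfa:
  assumes "finite Al" "finite (trans M)"
  shows "nfa_wf Al (relabel_nfa Al R M s s')"
proof -
  have "trans (relabel_nfa Al R M s s') \<subseteq> (\<lambda>((p, b, q), c). (p, c, q)) ` (trans M \<times> Al)"
    unfolding relabel_nfa_def by force
  then show ?thesis
    using assms finite_subset unfolding nfa_wf_def by (fastforce simp: relabel_nfa_def)
qed

lemma segp_eq_single: "segp L p q = [c] \<longleftrightarrow> q = p \<and> c = L p"
  unfolding segp_def by (cases "p \<le> q") (auto simp: upt_conv_Cons simp del: upt_Suc)

lemma segp_eq_two: "segp L p q = [c, c'] \<longleftrightarrow> q = Suc p \<and> c = L p \<and> c' = L (Suc p)"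
proof
  assume seg: "segp L p q = [c, c']"
  then have "length (segp L p q) = 2" by simp
  then have "q = Suc p" unfolding segp_def by (simp del: upt_Suc)
  with seg show "q = Suc p \<and> c = L p \<and> c' = L (Suc p)" by (simp add: segp_def)
qed (simp add: segp_def)

lemma segp_letter_nfa:
  "L p \<in> Al \<Longrightarrow> segp L p q \<in> lang (letter_nfa Al P) \<longleftrightarrow> q = p \<and> P (L p)"
  unfolding lang_letter_nfa using segp_eq_single by fastforce

lemma segp_two_letter_nfa:
  "range L \<subseteq> Al \<Longrightarrow> segp L p q \<in> lang (two_letter_nfa Al) \<longleftrightarrow> q = Suc p"
  unfolding lang_two_letter_nfa using segp_eq_two by fastforce

lemma segp_relabel_nfa:
  assumes "range L \<subseteq> Al"
  shows "segp L (Suc p) q \<in> lang (relabel_nfa Al R M s s') \<longleftrightarrow> run_on (\<lambda>j. R (L j)) M s p q s'"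
proof -
  have "set (segp L (Suc p) q) \<subseteq> range L" unfolding segp_def by auto
  with assms have "segp L (Suc p) q \<in> lists Al" by auto
  then show ?thesis
    unfolding lang_relabel_nfa run_on_def by (simp add: segp_def list_all2_map1 del: upt_Suc)
qed

section \<open>Future and past modalities as chains of segments\<close>

fun chain :: "(intv \<times> (nat, 'b) nfa) list \<Rightarrow> (nat, 'b) nfa \<Rightarrow> (nat \<Rightarrow> 'b) \<Rightarrow> (nat \<Rightarrow> real)
    \<Rightarrow> nat \<Rightarrow> nat \<Rightarrow> bool" where
  "chain [] B L d n p \<longleftrightarrow> p \<le> n \<and> segp L p n \<in> lang B"
| "chain ((I, A) # xs) B L d n p \<longleftrightarrow>
     (\<exists>p'. p \<le> p' \<and> p' \<le> n \<and> in_intv (d p') I \<and> segp L p p' \<in> lang A \<and> chain xs B L d n p')"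

lemma chain_le: "chain xs B L d n p \<Longrightarrow> p \<le> n"
  by (induction xs arbitrary: p) force+

definition fut_match :: "intv list \<Rightarrow> (nat, 'b) nfa list \<Rightarrow> (nat \<Rightarrow> 'b) \<Rightarrow> (nat \<Rightarrow> real)
    \<Rightarrow> nat \<Rightarrow> nat \<Rightarrow> bool" where
  "fut_match Is As L d n p \<longleftrightarrow> (\<exists>ix. ix 0 = p \<and> ix (length Is) \<le> n \<and>
     (\<forall>w<length Is. ix w \<le> ix (Suc w) \<and> in_intv (d (ix (Suc w))) (Is ! w) \<and>
        segp L (ix w) (ix (Suc w)) \<in> lang (As ! w)) \<and>
     segp L (ix (length Is)) n \<in> lang (As ! length Is))"

lemma ball_atLeastAtMost_1_iff: "(\<forall>w\<in>{1..k}. P (w - 1) w) \<longleftrightarrow> (\<forall>w<k. P w (Suc w))"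
proof
  assume P: "\<forall>w\<in>{1..k}. P (w - 1) w"
  show "\<forall>w<k. P w (Suc w)"
  proof (intro allI impI)
    fix w assume "w < k"
    then have "Suc w \<in> {1..k}" by simp
    with P show "P w (Suc w)" by fastforce
  qed
next
  assume P: "\<forall>w<k. P w (Suc w)"
  show "\<forall>w\<in>{1..k}. P (w - 1) w"
  proof
    fix w assume "w \<in> {1..k}"
    then obtain v where "w = Suc v" "v < k" by (cases w) auto
    with P show "P (w - 1) w" by simp
  qed
qed

lemma fut_sem_iff_fut_match:
  "fut_sem Is As L \<rho> i = fut_match Is As L (\<lambda>j. tau \<rho> j - tau \<rho> i) (length \<rho>) i"
proof -
  have "(\<forall>w\<in>{1..length Is}. in_intv (tau \<rho> (ix w) - tau \<rho> i) (Is ! (w - 1)) \<and>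
          segp L (ix (w - 1)) (ix w) \<in> lang (As ! (w - 1))) \<longleftrightarrow>
        (\<forall>w<length Is. in_intv (tau \<rho> (ix (Suc w)) - tau \<rho> i) (Is ! w) \<and>
          segp L (ix w) (ix (Suc w)) \<in> lang (As ! w))" for ix
    by (rule ball_atLeastAtMost_1_iff)
  then show ?thesis
    unfolding fut_sem_def fut_match_def Let_def by (simp add: all_conj_distrib) blast
qed

lemma fut_match_Nil: "fut_match [] As L d n p \<longleftrightarrow> p \<le> n \<and> segp L p n \<in> lang (As ! 0)"
  unfolding fut_match_def by auto

lemma lift_Suc_antimono_upto_le:
  fixes f :: "nat \<Rightarrow> 'a :: order"
  assumes "\<forall>w<k. f (Suc w) \<le> f w" "a \<le> b" "b \<le> k"
  shows "f b \<le> f a"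
proof -
  have "f (min (Suc w) k) \<le> f (min w k)" for w
    using assms(1) by (cases "Suc w \<le> k") (auto simp: min_def not_less_eq_eq le_antisym)
  then have "f (min b k) \<le> f (min a k)"
    using lift_Suc_antimono_le[of "\<lambda>w. f (min w k)"] assms(2) by blast
  with assms(2,3) show ?thesis by (simp add: min_def)
qed

lemma lift_Suc_mono_upto_le:
  fixes f :: "nat \<Rightarrow> 'a :: order"
  assumes "\<forall>w<k. f w \<le> f (Suc w)" "a \<le> b" "b \<le> k"
  shows "f a \<le> f b"
proof -
  have "f (min w k) \<le> f (min (Suc w) k)" for w
    using assms(1) by (cases "Suc w \<le> k") (auto simp: min_def not_less_eq_eq le_antisym)
  then have "f (min a k) \<le> f (min b k)"
    using lift_Suc_mono_le[of "\<lambda>w. f (min w k)"] assms(2) by blast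
  with assms(2,3) show ?thesis by (simp add: min_def)
qed

lemma fut_match_Cons:
  "fut_match (I # Is) (A # As) L d n p \<longleftrightarrow>
     (\<exists>p'. p \<le> p' \<and> p' \<le> n \<and> in_intv (d p') I \<and> segp L p p' \<in> lang A \<and> fut_match Is As L d n p')"
proof
  assume "fut_match (I # Is) (A # As) L d n p"
  then obtain ix where ix: "ix 0 = p" "ix (Suc (length Is)) \<le> n"
      "\<forall>w<Suc (length Is). ix w \<le> ix (Suc w) \<and> in_intv (d (ix (Suc w))) ((I # Is) ! w) \<and>
         segp L (ix w) (ix (Suc w)) \<in> lang ((A # As) ! w)"
      "segp L (ix (Suc (length Is))) n \<in> lang ((A # As) ! Suc (length Is))"
    unfolding fut_match_def by auto
  have "ix 1 \<le> n"
    using lift_Suc_mono_upto_le[of "Suc (length Is)" ix 1 "Suc (length Is)"] ix(2,3) by simp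
  moreover have "fut_match Is As L d n (ix 1)"
    unfolding fut_match_def using ix by (intro exI[of _ "\<lambda>w. ix (Suc w)"]) auto
  ultimately show "\<exists>p'. p \<le> p' \<and> p' \<le> n \<and> in_intv (d p') I \<and> segp L p p' \<in> lang A \<and>
      fut_match Is As L d n p'"
    using ix(1,3) by (intro exI[of _ "ix 1"]) auto
next
  assume "\<exists>p'. p \<le> p' \<and> p' \<le> n \<and> in_intv (d p') I \<and> segp L p p' \<in> lang A \<and> fut_match Is As L d n p'"
  then obtain p' ix where "p \<le> p'" "in_intv (d p') I" "segp L p p' \<in> lang A" "ix 0 = p'"
      "ix (length Is) \<le> n"
      "\<forall>w<length Is. ix w \<le> ix (Suc w) \<and> in_intv (d (ix (Suc w))) (Is ! w) \<and>
         segp L (ix w) (ix (Suc w)) \<in> lang (As ! w)"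
      "segp L (ix (length Is)) n \<in> lang (As ! length Is)"
    unfolding fut_match_def by auto
  then show "fut_match (I # Is) (A # As) L d n p"
    unfolding fut_match_def by (intro exI[of _ "case_nat p ix"]) (auto simp: less_Suc_eq_0_disj)
qed

lemma fut_match_iff_chain:
  "fut_match (map fst xs) (map snd xs @ [B]) L d n p \<longleftrightarrow> chain xs B L d n p"
  by (induction xs arbitrary: p) (auto simp: fut_match_Nil fut_match_Cons)

lemma segm_reflect:
  assumes "x \<le> y" "y \<le> n"
  shows "segm L y x = segp (\<lambda>j. L (Suc n - j)) (Suc n - y) (Suc n - x)"
proof -
  have "rev [x..<Suc y] = map (\<lambda>j. Suc n - j) [Suc n - y..<Suc (Suc n - x)]"
    using rev_upt_reflect[of "Suc y" "Suc n" x] assms Suc_diff_le[of x "Suc n"]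
    by (simp del: upt_Suc)
  then show ?thesis unfolding segm_def segp_def by (simp del: upt_Suc)
qed

definition past_match :: "intv list \<Rightarrow> (nat, 'b) nfa list \<Rightarrow> (nat \<Rightarrow> 'b) \<Rightarrow> (nat \<Rightarrow> real)
    \<Rightarrow> nat \<Rightarrow> bool" where
  "past_match Is As L d p \<longleftrightarrow> (\<exists>ix. ix 0 = p \<and> 1 \<le> ix (length Is) \<and>
     (\<forall>w<length Is. ix (Suc w) \<le> ix w \<and> in_intv (d (ix (Suc w))) (Is ! w) \<and>
        segm L (ix w) (ix (Suc w)) \<in> lang (As ! w)) \<and>
     segm L (ix (length Is)) 1 \<in> lang (As ! length Is))"

lemma past_sem_iff_past_match:
  "past_sem Is As L \<rho> i = past_match Is As L (\<lambda>j. tau \<rho> i - tau \<rho> j) i"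
proof -
  have "(\<forall>w\<in>{1..length Is}. in_intv (tau \<rho> i - tau \<rho> (ix w)) (Is ! (w - 1)) \<and>
          segm L (ix (w - 1)) (ix w) \<in> lang (As ! (w - 1))) \<longleftrightarrow>
        (\<forall>w<length Is. in_intv (tau \<rho> i - tau \<rho> (ix (Suc w))) (Is ! w) \<and>
          segm L (ix w) (ix (Suc w)) \<in> lang (As ! w))" for ix
    by (rule ball_atLeastAtMost_1_iff)
  then show ?thesis
    unfolding past_sem_def past_match_def Let_def by (simp add: all_conj_distrib) blast
qed

lemma past_match_imp_fut_match:
  assumes "i \<le> n" "past_match Is As L d i"
  shows "fut_match Is As (\<lambda>j. L (Suc n - j)) (\<lambda>j. d (Suc n - j)) n (Suc n - i)"
proof -
  let ?k = "length Is"
  obtain ix where ix: "ix 0 = i" "1 \<le> ix ?k"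
      "\<forall>w<?k. ix (Suc w) \<le> ix w \<and> in_intv (d (ix (Suc w))) (Is ! w) \<and>
        segm L (ix w) (ix (Suc w)) \<in> lang (As ! w)"
      "segm L (ix ?k) 1 \<in> lang (As ! ?k)"
    using assms(2) unfolding past_match_def by blast
  have bound: "1 \<le> ix w \<and> ix w \<le> n" if "w \<le> ?k" for w
    using lift_Suc_antimono_upto_le[of ?k ix w ?k] lift_Suc_antimono_upto_le[of ?k ix 0 w]
      ix(1-3) assms(1) that by simp
  show ?thesis
    unfolding fut_match_def
  proof (intro exI[of _ "\<lambda>w. Suc n - ix w"] conjI allI impI)
    fix w assume "w < ?k"
    with ix(3) bound[of w] bound[of "Suc w"] segm_reflect[of "ix (Suc w)" "ix w" n L]
    show "Suc n - ix w \<le> Suc n - ix (Suc w)"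
      "in_intv (d (Suc n - (Suc n - ix (Suc w)))) (Is ! w)"
      "segp (\<lambda>j. L (Suc n - j)) (Suc n - ix w) (Suc n - ix (Suc w)) \<in> lang (As ! w)"
      by (auto simp: Suc_diff_le)
  next
    show "segp (\<lambda>j. L (Suc n - j)) (Suc n - ix ?k) n \<in> lang (As ! ?k)"
      using ix(4) bound[of ?k] segm_reflect[of 1 "ix ?k" n L] by simp
  qed (use ix in auto)
qed

lemma fut_match_imp_past_match:
  assumes "i \<le> n" "fut_match Is As (\<lambda>j. L (Suc n - j)) (\<lambda>j. d (Suc n - j)) n (Suc n - i)"
  shows "past_match Is As L d i"
proof -
  let ?k = "length Is"
  obtain jx where jx: "jx 0 = Suc n - i" "jx ?k \<le> n"
      "\<forall>w<?k. jx w \<le> jx (Suc w) \<and> in_intv (d (Suc n - jx (Suc w))) (Is ! w) \<and>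
        segp (\<lambda>j. L (Suc n - j)) (jx w) (jx (Suc w)) \<in> lang (As ! w)"
      "segp (\<lambda>j. L (Suc n - j)) (jx ?k) n \<in> lang (As ! ?k)"
    using assms(2) unfolding fut_match_def by blast
  have bound: "1 \<le> jx w \<and> jx w \<le> n" if "w \<le> ?k" for w
    using lift_Suc_mono_upto_le[of ?k jx w ?k] lift_Suc_mono_upto_le[of ?k jx 0 w]
      jx(1-3) assms(1) that by simp
  show ?thesis
    unfolding past_match_def
  proof (intro exI[of _ "\<lambda>w. Suc n - jx w"] conjI allI impI)
    fix w assume "w < ?k"
    with jx(3) bound[of w] bound[of "Suc w"] segm_reflect[of "Suc n - jx (Suc w)" "Suc n - jx w" n L]
    show "Suc n - jx (Suc w) \<le> Suc n - jx w"
      "in_intv (d (Suc n - jx (Suc w))) (Is ! w)"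
      "segm L (Suc n - jx w) (Suc n - jx (Suc w)) \<in> lang (As ! w)"
      by (auto simp: Suc_diff_le)
  next
    have "1 \<le> Suc n - jx ?k" "Suc n - jx ?k \<le> n" using bound[of ?k] by auto
    then show "segm L (Suc n - jx ?k) 1 \<in> lang (As ! ?k)"
      using jx(4) bound[of ?k] segm_reflect[of 1 "Suc n - jx ?k" n L] by simp
  qed (use jx assms(1) in auto)
qed

lemma past_sem_iff_fut_match:
  assumes "i \<le> length \<rho>"
  shows "past_sem Is As L \<rho> i \<longleftrightarrow>
    fut_match Is As (\<lambda>j. L (Suc (length \<rho>) - j)) (\<lambda>j. tau \<rho> i - tau \<rho> (Suc (length \<rho>) - j))
      (length \<rho>) (Suc (length \<rho>) - i)"
  unfolding past_sem_iff_past_match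
  using past_match_imp_fut_match[OF assms, where d = "\<lambda>j. tau \<rho> i - tau \<rho> j"]
    fut_match_imp_past_match[OF assms, where d = "\<lambda>j. tau \<rho> i - tau \<rho> j"] by blast

section \<open>Blocks of constant type\<close>

definition list_of_set :: "'a set \<Rightarrow> 'a list" where
  "list_of_set T = (SOME xs. set xs = T)"

lemma set_list_of_set: "finite T \<Longrightarrow> set (list_of_set T) = T"
  unfolding list_of_set_def by (rule someI_ex) (rule finite_list)

abbreviation any_letter_nfa :: "'c set \<Rightarrow> (nat, 'c) nfa" where
  "any_letter_nfa Al \<equiv> letter_nfa Al (\<lambda>_. True)"

definition checks :: "'c set \<Rightarrow> (intv \<Rightarrow> intv) \<Rightarrow> intv set \<Rightarrow> (intv \<times> (nat, 'c) nfa) list" where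
  "checks Al h T = map (\<lambda>I. (h I, any_letter_nfa Al)) (list_of_set T)"

text \<open>Entered in state \<open>s\<close> after position \<open>p\<close>, a block \<open>(T, s')\<close> covers the positions
  \<open>Suc p, \<dots>, q\<close>. The intervals of \<open>T\<close> are checked only at \<open>Suc p\<close> and \<open>q\<close>, which suffices by
  convexity.\<close>

fun block_items :: "'c set \<Rightarrow> (intv \<Rightarrow> intv) \<Rightarrow> ('q, 'b) nfa \<Rightarrow> (intv set \<Rightarrow> 'c \<Rightarrow> 'b \<Rightarrow> bool)
    \<Rightarrow> 'q \<Rightarrow> (intv set \<times> 'q) list \<Rightarrow> (intv \<times> (nat, 'c) nfa) list" where
  "block_items Al h M R s [] = []"
| "block_items Al h M R s ((T, s') # bs) =
     (univ_intv, two_letter_nfa Al) # checks Al h T @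
     (univ_intv, nat_nfa Al (relabel_nfa Al (R T) M s s')) # checks Al h T @
     block_items Al h M R s' bs"

lemma chain_checks:
  assumes "range L \<subseteq> Al" "finite T"
  shows "chain (checks Al h T @ xs) B L d n p \<longleftrightarrow> (\<forall>I\<in>T. in_intv (d p) (h I)) \<and> chain xs B L d n p"
proof -
  have stay: "segp L p p' \<in> lang (any_letter_nfa Al) \<longleftrightarrow> p' = p" for p p'
    using segp_letter_nfa range_subsetD[OF assms(1)] by blast
  have "chain (map (\<lambda>I. (h I, any_letter_nfa Al)) Is @ xs) B L d n p \<longleftrightarrow>
      (\<forall>I\<in>set Is. in_intv (d p) (h I)) \<and> chain xs B L d n p" for Is
    by (induction Is) (auto simp: stay dest: chain_le)
  from this[of "list_of_set T"] show ?thesis unfolding checks_def set_list_of_set[OF assms(2)] .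
qed

lemma chain_block_items_Cons:
  assumes "finite Al" "finite (trans M)" "range L \<subseteq> Al" "finite T"
  shows "chain (block_items Al h M R s ((T, s') # bs)) B L d n p \<longleftrightarrow>
    (\<forall>I\<in>T. in_intv (d (Suc p)) (h I)) \<and>
    (\<exists>q. Suc p \<le> q \<and> q \<le> n \<and> run_on (\<lambda>j. R T (L j)) M s p q s' \<and>
       (\<forall>I\<in>T. in_intv (d q) (h I)) \<and> chain (block_items Al h M R s' bs) B L d n q)"
proof -
  have "lang (nat_nfa Al (relabel_nfa Al (R T) M s s')) = lang (relabel_nfa Al (R T) M s s')"
    by (rule lang_nat_nfa[OF nfa_wf_relabel_nfa[OF assms(1,2)]])
  then show ?thesis
    using assms(3) by (auto simp: chain_checks[OF assms(3,4)] segp_two_letter_nfa segp_relabel_nfa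
      dest: chain_le)
qed

lemma chain_block_items_sound:
  assumes "finite Al" "finite (trans M)" "range L \<subseteq> Al" "mono_on {p0<..n} d"
    and "\<forall>(T, s')\<in>set bs. finite T" "chain (block_items Al h M R s bs) (any_letter_nfa Al) L d n p"
    and "p0 \<le> p"
  shows "run_on (\<lambda>j b. \<exists>T. (\<forall>I\<in>T. in_intv (d j) (h I)) \<and> R T (L j) b) M s p n (last (s # map snd bs))"
  using assms(5-7)
proof (induction bs arbitrary: s p)
  case Nil
  then have "p = n" using segp_letter_nfa[OF range_subsetD[OF assms(3)]] by auto
  then show ?case by (simp add: run_on_refl)
next
  case (Cons blk bs)
  obtain T s' where blk: "blk = (T, s')" by (cases blk)
  with Cons.prems have "finite T" by auto
  with Cons.prems(2) obtain q where start: "\<forall>I\<in>T. in_intv (d (Suc p)) (h I)"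
      and q: "Suc p \<le> q" "q \<le> n" and run: "run_on (\<lambda>j. R T (L j)) M s p q s'"
      and stop: "\<forall>I\<in>T. in_intv (d q) (h I)"
      and rest: "chain (block_items Al h M R s' bs) (any_letter_nfa Al) L d n q"
    unfolding blk chain_block_items_Cons[OF assms(1-3) \<open>finite T\<close>] by blast
  let ?G = "\<lambda>j b. \<exists>T. (\<forall>I\<in>T. in_intv (d j) (h I)) \<and> R T (L j) b"
  have "run_on ?G M s p q s'"
  proof (rule run_on_mono[OF run])
    fix j b assume j: "p < j" "j \<le> q" "R T (L j) b"
    have "d (Suc p) \<le> d j" "d j \<le> d q"
      using j q Cons.prems(3) by (auto intro!: mono_onD[OF assms(4)])
    then have "\<forall>I\<in>T. in_intv (d j) (h I)" using start stop in_intv_convex by blast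
    with j show "?G j b" by blast
  qed
  moreover have "run_on ?G M s' q n (last (s' # map snd bs))"
    using Cons.IH[OF _ rest] Cons.prems(1,3) q by simp
  moreover have "last (s # map snd (blk # bs)) = last (s' # map snd bs)" by (simp add: blk)
  ultimately show ?case
    using run_on_split[of p q n ?G M s] q by auto
qed

lemma obtain_maximal_constant_block:
  fixes ty :: "nat \<Rightarrow> 'a"
  assumes "p < n"
  obtains q where "p < q" "q \<le> n" "\<And>j. p < j \<Longrightarrow> j \<le> q \<Longrightarrow> ty j = ty (Suc p)"
    "q < n \<longrightarrow> ty (Suc q) \<noteq> ty (Suc p)"
proof -
  define S where "S = {q. p < q \<and> q \<le> n \<and> (\<forall>j. p < j \<longrightarrow> j \<le> q \<longrightarrow> ty j = ty (Suc p))}"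
  have S: "q \<in> S \<longleftrightarrow> p < q \<and> q \<le> n \<and> (\<forall>j. p < j \<longrightarrow> j \<le> q \<longrightarrow> ty j = ty (Suc p))" for q
    unfolding S_def by simp
  have "S \<subseteq> {..n}" unfolding S_def by auto
  then have "finite S" by (rule finite_subset) simp
  moreover have "Suc p \<in> S" using S assms by (auto simp: le_Suc_eq)
  ultimately have max: "Max S \<in> S" "\<And>q. q \<in> S \<Longrightarrow> q \<le> Max S"
    using Max_in Max_ge by blast+
  have block: "p < Max S" "Max S \<le> n" "\<And>j. p < j \<Longrightarrow> j \<le> Max S \<Longrightarrow> ty j = ty (Suc p)"
    using max(1) unfolding S by blast+
  moreover have "Max S < n \<longrightarrow> ty (Suc (Max S)) \<noteq> ty (Suc p)"
  proof (intro impI notI)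
    assume "Max S < n" and change: "ty (Suc (Max S)) = ty (Suc p)"
    have "Suc (Max S) \<in> S"
      unfolding S
    proof (intro conjI allI impI)
      fix j assume "p < j" "j \<le> Suc (Max S)"
      then consider "j \<le> Max S" | "j = Suc (Max S)" by linarith
      then show "ty j = ty (Suc p)" using block(3)[of j] change \<open>p < j\<close> by cases simp_all
    qed (use block(1) \<open>Max S < n\<close> in simp_all)
    then show False using max(2)[of "Suc (Max S)"] by simp
  qed
  ultimately show ?thesis by (rule that)
qed

lemma obtain_first_block:
  assumes ty: "\<And>j. ty j = {I\<in>K. in_intv (d j) (h I)}"
    and "run_on (\<lambda>j. R (ty j) (L j)) M s p n sf" "p < n"
  obtains q s' where "p < q" "q \<le> n" "run_on (\<lambda>j. R (ty (Suc p)) (L j)) M s p q s'"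
    "\<forall>I\<in>ty (Suc p). in_intv (d (Suc p)) (h I) \<and> in_intv (d q) (h I)"
    "run_on (\<lambda>j. R (ty j) (L j)) M s' q n sf"
    "q < n \<longrightarrow> card {j. p < j \<and> j < n \<and> ty j \<noteq> ty (Suc j)} =
       Suc (card {j. q < j \<and> j < n \<and> ty j \<noteq> ty (Suc j)})"
proof -
  let ?C = "\<lambda>p. {j. p < j \<and> j < n \<and> ty j \<noteq> ty (Suc j)}"
  obtain q where q: "p < q" "q \<le> n" and const: "\<And>j. p < j \<Longrightarrow> j \<le> q \<Longrightarrow> ty j = ty (Suc p)"
      and change: "q < n \<longrightarrow> ty (Suc q) \<noteq> ty (Suc p)"
    using obtain_maximal_constant_block[where ty = ty, OF assms(3)] by metis
  obtain s' where run: "run_on (\<lambda>j. R (ty j) (L j)) M s p q s'"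
      and rest: "run_on (\<lambda>j. R (ty j) (L j)) M s' q n sf"
    using assms(2) run_on_split[of p q n "\<lambda>j. R (ty j) (L j)" M s sf] q by auto
  have block: "run_on (\<lambda>j. R (ty (Suc p)) (L j)) M s p q s'"
  proof (rule run_on_mono[OF run])
    fix j b assume "p < j" "j \<le> q" "R (ty j) (L j) b"
    then show "R (ty (Suc p)) (L j) b" using const[of j] by simp
  qed
  have "ty q = ty (Suc p)" using const[of q] q(1) by simp
  then have checks: "\<forall>I\<in>ty (Suc p). in_intv (d (Suc p)) (h I) \<and> in_intv (d q) (h I)"
    using ty[of q] ty[of "Suc p"] by auto
  have "q < n \<longrightarrow> card (?C p) = Suc (card (?C q))"
  proof
    assume "q < n"
    have "j \<in> ?C p \<longleftrightarrow> j = q \<or> j \<in> ?C q" for j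
      by (cases j q rule: linorder_cases)
        (use const[of j] const[of "Suc j"] change \<open>q < n\<close> q(1) \<open>ty q = ty (Suc p)\<close> in auto)
    then have "?C p = insert q (?C q)" by blast
    moreover have "q \<notin> ?C q" "finite (?C q)" by (auto intro: finite_subset[of _ "{..<n}"])
    ultimately show "card (?C p) = Suc (card (?C q))" by simp
  qed
  with q block checks rest show ?thesis by (rule that)
qed

lemma chain_block_items_complete:
  assumes "finite Al" "finite (trans M)" "range L \<subseteq> Al" "finite K"
    and ty: "\<And>j. ty j = {I\<in>K. in_intv (d j) (h I)}"
    and "run_on (\<lambda>j. R (ty j) (L j)) M s p n sf" "p \<le> n"
  shows "\<exists>bs. length bs \<le> card {j. p < j \<and> j < n \<and> ty j \<noteq> ty (Suc j)} + 1 \<and>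
    set bs \<subseteq> Pow K \<times> nfa_states M \<and> last (s # map snd bs) = sf \<and>
    chain (block_items Al h M R s bs) (any_letter_nfa Al) L d n p"
  using assms(6,7)
proof (induction "n - p" arbitrary: p s rule: less_induct)
  case less
  have stay: "segp L n n \<in> lang (any_letter_nfa Al)"
    using segp_letter_nfa[OF range_subsetD[OF assms(3)]] by simp
  show ?case
  proof (cases "p = n")
    case True
    with less.prems have "s = sf" by (simp add: run_on_refl)
    with True stay show ?thesis by (intro exI[of _ "[]"]) simp
  next
    case False
    with less.prems(2) have "p < n" by simp
    obtain q s' where q: "p < q" "q \<le> n"
        and block: "run_on (\<lambda>j. R (ty (Suc p)) (L j)) M s p q s'"
        and checks: "\<forall>I\<in>ty (Suc p). in_intv (d (Suc p)) (h I) \<and> in_intv (d q) (h I)"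
        and rest: "run_on (\<lambda>j. R (ty j) (L j)) M s' q n sf"
        and card: "q < n \<longrightarrow> card {j. p < j \<and> j < n \<and> ty j \<noteq> ty (Suc j)} =
          Suc (card {j. q < j \<and> j < n \<and> ty j \<noteq> ty (Suc j)})"
      by (rule obtain_first_block[where R = R and L = L, OF ty less.prems(1) \<open>p < n\<close>])
    let ?T = "ty (Suc p)"
    have TK: "?T \<subseteq> K" "finite ?T" using ty[of "Suc p"] assms(4) by auto
    have s': "s' \<in> nfa_states M" using run_on_target_state[OF block q(1)] .
    have step: "chain (block_items Al h M R s ((?T, s') # bs)) (any_letter_nfa Al) L d n p"
      if "chain (block_items Al h M R s' bs) (any_letter_nfa Al) L d n q" for bs
      unfolding chain_block_items_Cons[OF assms(1-3) TK(2)]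
      using that block q checks by (auto intro!: exI[of _ q] simp: Suc_le_eq)
    show ?thesis
    proof (cases "q = n")
      case True
      with rest have "s' = sf" by (simp add: run_on_refl)
      with True step[of "[]"] stay TK s' show ?thesis
        by (intro exI[of _ "[(?T, s')]"]) auto
    next
      case False
      with q have "n - q < n - p" by simp
      from less.hyps[OF this rest q(2)] obtain bs where
          "length bs \<le> card {j. q < j \<and> j < n \<and> ty j \<noteq> ty (Suc j)} + 1"
          "set bs \<subseteq> Pow K \<times> nfa_states M" "last (s' # map snd bs) = sf"
          "chain (block_items Al h M R s' bs) (any_letter_nfa Al) L d n q"
        by blast
      with card False q(2) step TK s' show ?thesis
        by (intro exI[of _ "(?T, s') # bs"]) auto
    qed
  qed
qed

lemma card_le_1_if_no_less_pair:
  assumes "finite A" "\<And>x y. x \<in> A \<Longrightarrow> y \<in> A \<Longrightarrow> x < (y :: nat) \<Longrightarrow> False"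
  shows "card A \<le> 1"
  unfolding One_nat_def card_le_Suc0_iff_eq[OF assms(1)] using assms(2) by (metis linorder_cases)

lemma card_convex_crossings_le_1:
  assumes convex: "\<And>a b c. P a \<Longrightarrow> P c \<Longrightarrow> p < a \<Longrightarrow> a \<le> b \<Longrightarrow> b \<le> c \<Longrightarrow> c \<le> n \<Longrightarrow> P b"
  shows "card {j. p < j \<and> j < n \<and> \<not> P j \<and> P (Suc j)} \<le> 1"
    and "card {j. p < j \<and> j < n \<and> P j \<and> \<not> P (Suc j)} \<le> 1"
proof -
  have fin: "finite {j. p < j \<and> j < n \<and> Q j}" for Q by (rule finite_subset[of _ "{..<n}"]) auto
  show "card {j. p < j \<and> j < n \<and> \<not> P j \<and> P (Suc j)} \<le> 1"
  proof (rule card_le_1_if_no_less_pair[OF fin])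
    fix x y assume x: "x \<in> {j. p < j \<and> j < n \<and> \<not> P j \<and> P (Suc j)}"
      and y: "y \<in> {j. p < j \<and> j < n \<and> \<not> P j \<and> P (Suc j)}" and "x < y"
    have "P y" by (rule convex[where a = "Suc x" and b = y and c = "Suc y"]) (use x y \<open>x < y\<close> in \<open>auto simp: Suc_le_eq\<close>)
    with y show False by simp
  qed
  show "card {j. p < j \<and> j < n \<and> P j \<and> \<not> P (Suc j)} \<le> 1"
  proof (rule card_le_1_if_no_less_pair[OF fin])
    fix x y assume x: "x \<in> {j. p < j \<and> j < n \<and> P j \<and> \<not> P (Suc j)}"
      and y: "y \<in> {j. p < j \<and> j < n \<and> P j \<and> \<not> P (Suc j)}" and "x < y"
    have "P (Suc x)" by (rule convex[where a = x and b = "Suc x" and c = y]) (use x y \<open>x < y\<close> in \<open>auto simp: Suc_le_eq\<close>)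
    with x show False by simp
  qed
qed

lemma card_type_changes_le:
  assumes "finite K" and ty: "\<And>j. ty j = {I\<in>K. in_intv (d j) (h I)}" and "mono_on {p<..n} d"
  shows "card {j. p < j \<and> j < n \<and> ty j \<noteq> ty (Suc j)} \<le> 2 * card K"
proof -
  define enter where "enter I = {j. p < j \<and> j < n \<and> \<not> I \<in> ty j \<and> I \<in> ty (Suc j)}" for I
  define leave where "leave I = {j. p < j \<and> j < n \<and> I \<in> ty j \<and> \<not> I \<in> ty (Suc j)}" for I
  have fin: "finite (enter I \<union> leave I)" for I
    unfolding enter_def leave_def by (rule finite_subset[of _ "{..<n}"]) auto
  have crossings: "card (enter I) \<le> 1" "card (leave I) \<le> 1" for I
  proof -
    have "I \<in> ty b" if "I \<in> ty a" "I \<in> ty c" "p < a" "a \<le> b" "b \<le> c" "c \<le> n" for a b c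
    proof -
      have "d a \<le> d b" "d b \<le> d c" using that by (auto intro!: mono_onD[OF assms(3)])
      with that show ?thesis unfolding ty using in_intv_convex by blast
    qed
    note crossings = card_convex_crossings_le_1[where P = "\<lambda>j. I \<in> ty j", OF this]
    show "card (enter I) \<le> 1" unfolding enter_def using crossings(1) by simp
    show "card (leave I) \<le> 1" unfolding leave_def using crossings(2) by simp
  qed
  have two: "card (enter I \<union> leave I) \<le> 2" for I
    using card_Un_le[of "enter I" "leave I"] crossings[of I] by linarith
  have "card {j. p < j \<and> j < n \<and> ty j \<noteq> ty (Suc j)} \<le> card (\<Union>I\<in>K. enter I \<union> leave I)"
  proof (rule card_mono)
    show "finite (\<Union>I\<in>K. enter I \<union> leave I)" using assms(1) fin by blast
    show "{j. p < j \<and> j < n \<and> ty j \<noteq> ty (Suc j)} \<subseteq> (\<Union>I\<in>K. enter I \<union> leave I)"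
      unfolding enter_def leave_def using ty by blast
  qed
  also have "\<dots> \<le> (\<Sum>I\<in>K. card (enter I \<union> leave I))" by (rule card_UN_le[OF assms(1)])
  also have "\<dots> \<le> (\<Sum>I\<in>K. 2)" using two by (rule sum_mono)
  finally show ?thesis by simp
qed

lemma nfa_wf_block_items:
  assumes "finite Al" "finite (trans M)"
  shows "\<forall>x\<in>set (block_items Al h M R s bs). nfa_wf Al (snd x)"
proof (induction bs arbitrary: s)
  case (Cons blk bs)
  obtain T s' where "blk = (T, s')" by (cases blk)
  with Cons.IH show ?case
    using nfa_wf_nat_nfa[OF nfa_wf_relabel_nfa[OF assms]] nfa_wf_two_letter_nfa[OF assms(1)]
      nfa_wf_letter_nfa[OF assms(1)] by (auto simp: checks_def)
qed simp

definition prop_letter :: "'a list \<Rightarrow> 'a tword \<Rightarrow> nat \<Rightarrow> nat set" where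
  "prop_letter sl \<rho> j = {m. m < length sl \<and> sl ! m \<in> sig \<rho> j}"

definition props_of :: "'a list \<Rightarrow> nat set \<Rightarrow> 'a set" where
  "props_of sl c = (\<lambda>m. sl ! m) ` c"

lemma props_of_prop_letter:
  assumes "sig \<rho> j \<subseteq> set sl"
  shows "props_of sl (prop_letter sl \<rho> j) = sig \<rho> j"
proof
  show "sig \<rho> j \<subseteq> props_of sl (prop_letter sl \<rho> j)"
  proof
    fix x assume "x \<in> sig \<rho> j"
    moreover from this assms obtain m where "m < length sl" "x = sl ! m"
      by (metis in_set_conv_nth subsetD)
    ultimately show "x \<in> props_of sl (prop_letter sl \<rho> j)"
      unfolding props_of_def prop_letter_def by auto
  qed
qed (auto simp: props_of_def prop_letter_def)

abbreviation letters :: "'a list \<Rightarrow> nat set set" where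
  "letters sl \<equiv> Pow {..<length sl}"

lemma prop_letter_in_letters: "prop_letter sl \<rho> j \<in> letters sl"
  unfolding prop_letter_def by auto

definition fut_fm :: "'a list \<Rightarrow> (intv \<times> (nat, nat set) nfa) list \<Rightarrow> 'a fm" where
  "fut_fm sl xs = FFut (map fst xs) (map snd xs @ [any_letter_nfa (letters sl)]) (map FProp sl)"

definition past_fm :: "'a list \<Rightarrow> (intv \<times> (nat, nat set) nfa) list \<Rightarrow> 'a fm" where
  "past_fm sl xs = FPast (map fst xs) (map snd xs @ [any_letter_nfa (letters sl)]) (map FProp sl)"

lemma props_valuation:
  "{m. m < length (map FProp sl) \<and> (map sat (map FProp sl) ! m) \<rho> j} = prop_letter sl \<rho> j"
  unfolding prop_letter_def by (auto cong: conj_cong)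

lemma sat_fut_fm:
  "sat (fut_fm sl xs) \<rho> i \<longleftrightarrow>
    chain xs (any_letter_nfa (letters sl)) (prop_letter sl \<rho>) (\<lambda>j. tau \<rho> j - tau \<rho> i) (length \<rho>) i"
  unfolding fut_fm_def sat.simps Let_def fut_sem_iff_fut_match fut_match_iff_chain
  by (simp only: props_valuation)

lemma sat_past_fm:
  assumes "i \<le> length \<rho>"
  shows "sat (past_fm sl xs) \<rho> i \<longleftrightarrow>
    chain xs (any_letter_nfa (letters sl)) (\<lambda>j. prop_letter sl \<rho> (Suc (length \<rho>) - j))
      (\<lambda>j. tau \<rho> i - tau \<rho> (Suc (length \<rho>) - j)) (length \<rho>) (Suc (length \<rho>) - i)"
  unfolding past_fm_def sat.simps Let_def past_sem_iff_fut_match[OF assms] fut_match_iff_chain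
  by (simp only: props_valuation)

lemma wf_fut_fm:
  "set sl \<subseteq> Sig \<Longrightarrow> xs \<noteq> [] \<Longrightarrow> \<forall>x\<in>set xs. nfa_wf (letters sl) (snd x) \<Longrightarrow> wf_fm Sig (fut_fm sl xs)"
  unfolding fut_fm_def using nfa_wf_letter_nfa[of "letters sl"]
  by (auto simp: Suc_le_eq list_all_iff)

lemma wf_past_fm:
  "set sl \<subseteq> Sig \<Longrightarrow> xs \<noteq> [] \<Longrightarrow> \<forall>x\<in>set xs. nfa_wf (letters sl) (snd x) \<Longrightarrow> wf_fm Sig (past_fm sl xs)"
  unfolding past_fm_def using nfa_wf_letter_nfa[of "letters sl"]
  by (auto simp: Suc_le_eq list_all_iff)

definition fm_false :: "'a fm" where
  "fm_false = FFut [univ_intv] [\<lparr>init = {}, final = {}, trans = {}\<rparr>, \<lparr>init = {}, final = {}, trans = {}\<rparr>] []"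

fun fm_disj :: "'a fm list \<Rightarrow> 'a fm" where
  "fm_disj [] = fm_false"
| "fm_disj (\<phi> # \<phi>s) = FNeg (FAnd (FNeg \<phi>) (FNeg (fm_disj \<phi>s)))"

lemma sat_fm_disj: "sat (fm_disj \<phi>s) \<rho> i \<longleftrightarrow> (\<exists>\<phi>\<in>set \<phi>s. sat \<phi> \<rho> i)"
  by (induction \<phi>s) (auto simp: fm_false_def fut_sem_def lang_def)

lemma wf_fm_disj: "\<forall>\<phi>\<in>set \<phi>s. wf_fm Sig \<phi> \<Longrightarrow> wf_fm Sig (fm_disj \<phi>s)"
  by (induction \<phi>s) (auto simp: fm_false_def nfa_wf_def)

definition letter_match :: "'a list \<Rightarrow> intv set \<Rightarrow> nat set \<Rightarrow> 'a isym set \<Rightarrow> bool" where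
  "letter_match sl T c b \<longleftrightarrow> {a. IProp a \<in> b} = props_of sl c \<and> Anch \<notin> b \<and> (\<forall>I. IItv I \<in> b \<longrightarrow> I \<in> T)"

definition block_lists :: "intv set \<Rightarrow> 'q set \<Rightarrow> (intv set \<times> 'q) list set" where
  "block_lists K Q = {bs. set bs \<subseteq> Pow K \<times> Q \<and> length bs \<le> 2 * card K + 1}"

lemma finite_block_lists: "finite K \<Longrightarrow> finite Q \<Longrightarrow> finite (block_lists K Q)"
  unfolding block_lists_def by (rule finite_lists_length_le) auto

lemma nfa_wf_IItv_in:
  "nfa_wf (Pow (IProp ` Sig \<union> IItv ` K \<union> {Anch})) A \<Longrightarrow> (x, b, y) \<in> trans A \<Longrightarrow> IItv I \<in> b \<Longrightarrow> I \<in> K"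
  unfolding nfa_wf_def by auto

lemma block_items_iff_run:
  fixes M :: "('q, 'a isym set) nfa"
  assumes "finite K" "nfa_wf (Pow (IProp ` Sig \<union> IItv ` K \<union> {Anch})) M" "range L \<subseteq> letters sl"
    and "mono_on {p<..n} d" "p \<le> n"
  shows "(\<exists>bs\<in>block_lists K (nfa_states M). last (s # map snd bs) = sf \<and>
      chain (block_items (letters sl) h M (letter_match sl) s bs) (any_letter_nfa (letters sl)) L d n p)
    \<longleftrightarrow> run_on (\<lambda>j b. {a. IProp a \<in> b} = props_of sl (L j) \<and> Anch \<notin> b \<and>
          (\<forall>I. IItv I \<in> b \<longrightarrow> in_intv (d j) (h I))) M s p n sf"
    (is "_ \<longleftrightarrow> run_on ?G M s p n sf")
proof -
  have fin: "finite (letters sl)" "finite (trans M)" using assms(2) unfolding nfa_wf_def by auto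
  show ?thesis
  proof
    assume "\<exists>bs\<in>block_lists K (nfa_states M). last (s # map snd bs) = sf \<and>
      chain (block_items (letters sl) h M (letter_match sl) s bs) (any_letter_nfa (letters sl)) L d n p"
    then obtain bs where bs: "set bs \<subseteq> Pow K \<times> nfa_states M" "last (s # map snd bs) = sf"
        "chain (block_items (letters sl) h M (letter_match sl) s bs) (any_letter_nfa (letters sl)) L d n p"
      unfolding block_lists_def by blast
    have "\<forall>(T, s')\<in>set bs. finite T" using bs(1) assms(1) by (auto intro: finite_subset)
    from chain_block_items_sound[OF fin assms(3,4) this bs(3) order_refl]
    show "run_on ?G M s p n sf"
      unfolding bs(2) by (rule run_on_mono) (auto simp: letter_match_def)
  next
    define ty where "ty j = {I\<in>K. in_intv (d j) (h I)}" for j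
    assume "run_on ?G M s p n sf"
    then have "run_on (\<lambda>j. letter_match sl (ty j) (L j)) M s p n sf"
    proof (rule run_on_mono)
      fix j b assume "?G j b" "\<exists>x y. (x, b, y) \<in> trans M"
      moreover from this have "IItv I \<in> b \<Longrightarrow> I \<in> K" for I
        using nfa_wf_IItv_in[OF assms(2)] by blast
      ultimately show "letter_match sl (ty j) (L j) b"
        unfolding letter_match_def ty_def by auto
    qed
    from chain_block_items_complete[OF fin assms(3,1) ty_def this assms(5)]
      card_type_changes_le[OF assms(1) ty_def assms(4)]
    show "\<exists>bs\<in>block_lists K (nfa_states M). last (s # map snd bs) = sf \<and>
      chain (block_items (letters sl) h M (letter_match sl) s bs) (any_letter_nfa (letters sl)) L d n p"
      unfolding block_lists_def by fastforce
  qed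
qed

section \<open>Consistency with an interval word as a run of the automaton\<close>

definition consistent_letter :: "intv set \<Rightarrow> 'a tword \<Rightarrow> nat \<Rightarrow> nat \<Rightarrow> 'a isym set \<Rightarrow> bool" where
  "consistent_letter K \<rho> i j b \<longleftrightarrow> {a. IProp a \<in> b} = sig \<rho> j \<and> (Anch \<in> b \<longleftrightarrow> j = i) \<and>
     (j \<noteq> i \<longrightarrow> (\<forall>I\<in>K. IItv I \<in> b \<longrightarrow> in_intv (tau \<rho> j - tau \<rho> i) I))"

lemma list_all2_upt_1_iff:
  "list_all2 P [1..<Suc n] ys \<longleftrightarrow> length ys = n \<and> (\<forall>j\<in>{1..n}. P j (ys ! (j - 1)))"
proof -
  have "(\<forall>j\<in>{1..n}. P j (ys ! (j - 1))) \<longleftrightarrow> (\<forall>k<n. P (Suc k) (ys ! k))"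
    by (rule ball_atLeastAtMost_1_iff)
  then show ?thesis by (auto simp: list_all2_conv_all_nth simp del: upt_Suc)
qed

lemma anch_pos_eq_iff:
  assumes "interval_word Sig K \<kappa>" "i \<in> {1..length \<kappa>}"
  shows "anch_pos \<kappa> = i \<longleftrightarrow> (\<forall>j\<in>{1..length \<kappa>}. Anch \<in> \<kappa> ! (j - 1) \<longleftrightarrow> j = i)"
proof -
  have unique: "\<exists>!j. is_anchor \<kappa> j" using assms(1) unfolding interval_word_def by blast
  show ?thesis
  proof
    assume "anch_pos \<kappa> = i"
    then have "is_anchor \<kappa> i" using theI'[OF unique] unfolding anch_pos_def by simp
    with unique show "\<forall>j\<in>{1..length \<kappa>}. Anch \<in> \<kappa> ! (j - 1) \<longleftrightarrow> j = i"
      unfolding is_anchor_def by blast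
  next
    assume "\<forall>j\<in>{1..length \<kappa>}. Anch \<in> \<kappa> ! (j - 1) \<longleftrightarrow> j = i"
    with assms(2) have "is_anchor \<kappa> i" unfolding is_anchor_def by blast
    then show "anch_pos \<kappa> = i" unfolding anch_pos_def by (rule the1_equality[OF unique])
  qed
qed

lemma consistent_iff_list_all2:
  assumes "interval_word Sig K \<kappa>" "i \<in> dom_tw \<rho>"
  shows "consistent K \<rho> i \<kappa> \<longleftrightarrow> list_all2 (consistent_letter K \<rho> i) [1..<Suc (length \<rho>)] \<kappa>"
proof (cases "length \<kappa> = length \<rho>")
  case True
  with assms(2) have "anch_pos \<kappa> = i \<longleftrightarrow> (\<forall>j\<in>{1..length \<rho>}. Anch \<in> \<kappa> ! (j - 1) \<longleftrightarrow> j = i)"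
    using anch_pos_eq_iff[OF assms(1)] unfolding dom_tw_def by simp
  with True show ?thesis
    unfolding consistent_def consistent_letter_def list_all2_upt_1_iff dom_tw_def by auto
qed (auto simp: consistent_def simp del: upt_Suc dest: list_all2_lengthD)

lemma Time_iff_run:
  assumes "lang A \<subseteq> {\<kappa>. interval_word Sig K \<kappa>}" "i \<in> dom_tw \<rho>"
  shows "(\<rho>, i) \<in> Time K (lang A) \<longleftrightarrow>
    (\<exists>p0\<in>init A. \<exists>qf\<in>final A. run_on (consistent_letter K \<rho> i) A p0 0 (length \<rho>) qf)"
proof -
  have "\<forall>\<kappa>\<in>lang A. consistent K \<rho> i \<kappa> \<longleftrightarrow> list_all2 (consistent_letter K \<rho> i) [1..<Suc (length \<rho>)] \<kappa>"
    using consistent_iff_list_all2[OF _ assms(2)] assms(1) by blast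
  then show ?thesis
    unfolding Time_def run_on_def One_nat_def lang_def by (simp del: upt_Suc) blast
qed

lemma Time_iff_anchored_runs:
  assumes "lang A \<subseteq> {\<kappa>. interval_word Sig K \<kappa>}" "i \<in> dom_tw \<rho>"
  defines "n \<equiv> length \<rho>"
  shows "(\<rho>, i) \<in> Time K (lang A) \<longleftrightarrow> (\<exists>p0\<in>init A. \<exists>qf\<in>final A. \<exists>q0 q b.
    run_on (\<lambda>j. consistent_letter K \<rho> i (Suc n - j)) (rev_nfa A) q0 (Suc n - i) n p0 \<and>
    consistent_letter K \<rho> i i b \<and> (q0, b, q) \<in> trans A \<and>
    run_on (consistent_letter K \<rho> i) A q i n qf)"
proof -
  let ?G = "consistent_letter K \<rho> i"
  have i: "1 \<le> i" "i \<le> n" using assms(2) unfolding dom_tw_def n_def by auto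
  have "run_on ?G A p0 0 n qf \<longleftrightarrow> (\<exists>q0. run_on ?G A p0 0 (i - 1) q0 \<and> run_on ?G A q0 (i - 1) n qf)"
    for p0 qf by (rule run_on_split) (use i in auto)
  moreover have "run_on ?G A q0 (i - 1) n qf \<longleftrightarrow> (\<exists>q. run_on ?G A q0 (i - 1) i q \<and> run_on ?G A q i n qf)"
    for q0 qf by (rule run_on_split) (use i in auto)
  moreover have "run_on ?G A q0 (i - 1) i q \<longleftrightarrow> (\<exists>b. ?G i b \<and> (q0, b, q) \<in> trans A)" for q0 q
    using run_on_Suc[of ?G A q0 "i - 1" q] i by simp
  moreover have "run_on ?G A p0 0 (i - 1) q0 \<longleftrightarrow>
      run_on (\<lambda>j. ?G (Suc n - j)) (rev_nfa A) q0 (Suc n - i) n p0" for p0 q0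
    using run_on_reflect[of 0 "i - 1" n ?G A p0 q0] i by (simp add: Suc_diff_le)
  ultimately show ?thesis
    unfolding Time_iff_run[OF assms(1,2)] n_def[symmetric] by blast
qed

section \<open>The defining formula\<close>

definition anchor_match :: "'a list \<Rightarrow> nat set \<Rightarrow> 'a isym set \<Rightarrow> bool" where
  "anchor_match sl c b \<longleftrightarrow> {a. IProp a \<in> b} = props_of sl c \<and> Anch \<in> b"

text \<open>The guess \<open>(q0, q, bp, bf)\<close> fixes the anchor transition \<open>q0 \<rightarrow> q\<close> and the blocks of the
  runs before and after the anchor; the past part is read backwards by \<open>rev_nfa A\<close>. The leading
  trivial item of the past modality keeps it well-formed when \<open>bp = []\<close>.\<close>

definition anchored_fm ::
    "'a list \<Rightarrow> ('q, 'a isym set) nfa \<Rightarrow> 'q \<times> 'q \<times> (intv set \<times> 'q) list \<times> (intv set \<times> 'q) list \<Rightarrow> 'a fm" where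
  "anchored_fm sl A = (\<lambda>(q0, q, bp, bf).
     FAnd (past_fm sl ((univ_intv, any_letter_nfa (letters sl)) #
             block_items (letters sl) neg_intv (rev_nfa A) (letter_match sl) q0 bp))
          (fut_fm sl ((univ_intv, letter_nfa (letters sl) (\<lambda>c. \<exists>b. (q0, b, q) \<in> trans A \<and> anchor_match sl c b)) #
             block_items (letters sl) id A (letter_match sl) q bf)))"

definition guesses :: "intv set \<Rightarrow> ('q, 'b) nfa \<Rightarrow> ('q \<times> 'q \<times> (intv set \<times> 'q) list \<times> (intv set \<times> 'q) list) set" where
  "guesses K A = {(q0, q, bp, bf). q0 \<in> nfa_states A \<and> q \<in> nfa_states A \<and>
     bp \<in> block_lists K (nfa_states A) \<and> bf \<in> block_lists K (nfa_states A) \<and>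
     last (q0 # map snd bp) \<in> init A \<and> last (q # map snd bf) \<in> final A}"

lemma finite_guesses: "nfa_wf Al A \<Longrightarrow> finite K \<Longrightarrow> finite (guesses K A)"
proof -
  assume "nfa_wf Al A" "finite K"
  then have "finite (nfa_states A \<times> nfa_states A \<times> block_lists K (nfa_states A) \<times> block_lists K (nfa_states A))"
    using finite_nfa_states finite_block_lists by blast
  then show ?thesis by (rule finite_subset[rotated]) (auto simp: guesses_def)
qed

lemma wf_anchored_fm:
  assumes "set sl = Sig" "finite (trans A)"
  shows "wf_fm Sig (anchored_fm sl A c)"
proof -
  obtain q0 q bp bf where c: "c = (q0, q, bp, bf)" by (cases c)
  have fin: "finite (letters sl)" "finite (trans (rev_nfa A))" using assms(2) by (auto simp: rev_nfa_def)
  show ?thesis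
    unfolding c anchored_fm_def prod.case
    using nfa_wf_block_items[OF fin(1) assms(2), of id "letter_match sl" q bf]
      nfa_wf_block_items[OF fin, of neg_intv "letter_match sl" q0 bp] nfa_wf_letter_nfa[OF fin(1)] assms(1)
    by (auto intro!: wf_past_fm wf_fut_fm)
qed

lemma chain_letter_nfa_Cons:
  "L p \<in> Al \<Longrightarrow> chain ((univ_intv, letter_nfa Al P) # xs) B L d n p \<longleftrightarrow> P (L p) \<and> chain xs B L d n p"
  by (auto simp: segp_letter_nfa dest: chain_le)

definition past_block_chain :: "'a list \<Rightarrow> ('q, 'a isym set) nfa \<Rightarrow> 'a tword \<Rightarrow> nat \<Rightarrow> 'q
    \<Rightarrow> (intv set \<times> 'q) list \<Rightarrow> bool" where
  "past_block_chain sl A \<rho> i q0 bp \<longleftrightarrow>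
     chain (block_items (letters sl) neg_intv (rev_nfa A) (letter_match sl) q0 bp)
       (any_letter_nfa (letters sl)) (\<lambda>j. prop_letter sl \<rho> (Suc (length \<rho>) - j))
       (\<lambda>j. tau \<rho> i - tau \<rho> (Suc (length \<rho>) - j)) (length \<rho>) (Suc (length \<rho>) - i)"

definition fut_block_chain :: "'a list \<Rightarrow> ('q, 'a isym set) nfa \<Rightarrow> 'a tword \<Rightarrow> nat \<Rightarrow> 'q
    \<Rightarrow> (intv set \<times> 'q) list \<Rightarrow> bool" where
  "fut_block_chain sl A \<rho> i q bf \<longleftrightarrow>
     chain (block_items (letters sl) id A (letter_match sl) q bf)
       (any_letter_nfa (letters sl)) (prop_letter sl \<rho>) (\<lambda>j. tau \<rho> j - tau \<rho> i) (length \<rho>) i"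

lemma sat_anchored_fm:
  "i \<le> length \<rho> \<Longrightarrow> sat (anchored_fm sl A (q0, q, bp, bf)) \<rho> i \<longleftrightarrow>
    past_block_chain sl A \<rho> i q0 bp \<and> (\<exists>b. (q0, b, q) \<in> trans A \<and> anchor_match sl (prop_letter sl \<rho> i) b) \<and>
    fut_block_chain sl A \<rho> i q bf"
  unfolding anchored_fm_def past_block_chain_def fut_block_chain_def prod.case sat.simps(2)
    sat_past_fm sat_fut_fm chain_letter_nfa_Cons[OF prop_letter_in_letters] by simp

lemma props_of_prop_letter_timed_word:
  assumes "timed_word (set sl) \<rho>" "j \<in> dom_tw \<rho>"
  shows "props_of sl (prop_letter sl \<rho> j) = sig \<rho> j"
proof (rule props_of_prop_letter)
  show "sig \<rho> j \<subseteq> set sl" using assms unfolding timed_word_def by blast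
qed

lemma timed_word_tau_mono:
  "timed_word Sig \<rho> \<Longrightarrow> 1 \<le> j \<Longrightarrow> j \<le> j' \<Longrightarrow> j' \<le> length \<rho> \<Longrightarrow> tau \<rho> j \<le> tau \<rho> j'"
  unfolding timed_word_def dom_tw_def by auto

lemma fut_block_chain_iff_run:
  assumes "finite K" and A: "nfa_wf (Pow (IProp ` set sl \<union> IItv ` K \<union> {Anch})) A"
    and "timed_word (set sl) \<rho>" and i: "i \<in> dom_tw \<rho>"
  shows "(\<exists>bf\<in>block_lists K (nfa_states A). last (q # map snd bf) = qf \<and> fut_block_chain sl A \<rho> i q bf)
    \<longleftrightarrow> run_on (consistent_letter K \<rho> i) A q i (length \<rho>) qf"
proof -
  have letters: "range (prop_letter sl \<rho>) \<subseteq> letters sl" using prop_letter_in_letters by auto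
  have mono: "mono_on {i<..length \<rho>} (\<lambda>j. tau \<rho> j - tau \<rho> i)"
    using timed_word_tau_mono[OF assms(3)] i unfolding dom_tw_def by (intro mono_onI) auto
  have "i \<le> length \<rho>" using i unfolding dom_tw_def by simp
  from block_items_iff_run[OF assms(1) A letters mono this, where h = id]
  show ?thesis
    unfolding fut_block_chain_def
  proof (rule trans[OF _ run_on_cong])
    fix j b assume j: "i < j" "j \<le> length \<rho>" and "\<exists>x y. (x, b, y) \<in> trans A"
    then have "IItv I \<in> b \<Longrightarrow> I \<in> K" for I using nfa_wf_IItv_in[OF A] by blast
    moreover have "j \<in> dom_tw \<rho>" using i j unfolding dom_tw_def by auto
    ultimately show "{a. IProp a \<in> b} = props_of sl (prop_letter sl \<rho> j) \<and> Anch \<notin> b \<and>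
        (\<forall>I. IItv I \<in> b \<longrightarrow> in_intv (tau \<rho> j - tau \<rho> i) (id I)) \<longleftrightarrow> consistent_letter K \<rho> i j b"
      using j props_of_prop_letter_timed_word[OF assms(3)] unfolding consistent_letter_def by auto
  qed
qed

lemma past_block_chain_iff_run:
  assumes "finite K" and A: "nfa_wf (Pow (IProp ` set sl \<union> IItv ` K \<union> {Anch})) A"
    and "timed_word (set sl) \<rho>" and i: "i \<in> dom_tw \<rho>"
  defines "n \<equiv> length \<rho>"
  shows "(\<exists>bp\<in>block_lists K (nfa_states A). last (q0 # map snd bp) = p0 \<and> past_block_chain sl A \<rho> i q0 bp)
    \<longleftrightarrow> run_on (\<lambda>j. consistent_letter K \<rho> i (Suc n - j)) (rev_nfa A) q0 (Suc n - i) n p0"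
proof -
  have letters: "range (\<lambda>j. prop_letter sl \<rho> (Suc n - j)) \<subseteq> letters sl"
    using prop_letter_in_letters by auto
  have mono: "mono_on {Suc n - i<..n} (\<lambda>j. tau \<rho> i - tau \<rho> (Suc n - j))"
    using timed_word_tau_mono[OF assms(3)] i unfolding dom_tw_def n_def by (intro mono_onI) auto
  have "Suc n - i \<le> n" using i unfolding dom_tw_def n_def by auto
  from block_items_iff_run[OF assms(1) nfa_wf_rev_nfa[OF A] letters mono this, where h = neg_intv,
      unfolded nfa_states_rev_nfa]
  show ?thesis
    unfolding past_block_chain_def n_def[symmetric]
  proof (rule trans[OF _ run_on_cong])
    fix j b assume j: "Suc n - i < j" "j \<le> n" and "\<exists>x y. (x, b, y) \<in> trans (rev_nfa A)"
    then have "IItv I \<in> b \<Longrightarrow> I \<in> K" for I using nfa_wf_IItv_in[OF A] trans_rev_nfa by metis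
    moreover have "in_intv (tau \<rho> i - tau \<rho> (Suc n - j)) (neg_intv I) \<longleftrightarrow>
        in_intv (tau \<rho> (Suc n - j) - tau \<rho> i) I" for I
      using in_intv_neg_intv[of "tau \<rho> (Suc n - j) - tau \<rho> i" I] by simp
    moreover have "Suc n - j \<in> dom_tw \<rho>" "Suc n - j \<noteq> i" using i j unfolding dom_tw_def n_def by auto
    ultimately show "{a. IProp a \<in> b} = props_of sl (prop_letter sl \<rho> (Suc n - j)) \<and> Anch \<notin> b \<and>
        (\<forall>I. IItv I \<in> b \<longrightarrow> in_intv (tau \<rho> i - tau \<rho> (Suc n - j)) (neg_intv I)) \<longleftrightarrow>
        consistent_letter K \<rho> i (Suc n - j) b"
      using props_of_prop_letter_timed_word[OF assms(3)] unfolding consistent_letter_def by auto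
  qed
qed

lemma ex_sat_anchored_fm_iff_Time:
  assumes "finite K" and A: "nfa_wf (Pow (IProp ` set sl \<union> IItv ` K \<union> {Anch})) A"
    and iw: "lang A \<subseteq> {\<kappa>. interval_word (set sl) K \<kappa>}"
    and "timed_word (set sl) \<rho>" and i: "i \<in> dom_tw \<rho>"
  shows "(\<exists>c\<in>guesses K A. sat (anchored_fm sl A c) \<rho> i) \<longleftrightarrow> (\<rho>, i) \<in> Time K (lang A)"
proof -
  note past = past_block_chain_iff_run[OF assms(1,2,4,5)]
  note fut = fut_block_chain_iff_run[OF assms(1,2,4,5)]
  have i_n: "i \<le> length \<rho>" using i unfolding dom_tw_def by simp
  have anchor: "anchor_match sl (prop_letter sl \<rho> i) b \<longleftrightarrow> consistent_letter K \<rho> i i b" for b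
    using props_of_prop_letter_timed_word[OF assms(4) i]
    unfolding anchor_match_def consistent_letter_def by auto
  note sat = sat_anchored_fm[OF i_n, of sl A, unfolded anchor]
  show ?thesis
    unfolding Time_iff_anchored_runs[OF iw i]
  proof
    assume "\<exists>c\<in>guesses K A. sat (anchored_fm sl A c) \<rho> i"
    then obtain q0 q bp bf where "(q0, q, bp, bf) \<in> guesses K A" "sat (anchored_fm sl A (q0, q, bp, bf)) \<rho> i"
      by (metis prod_cases4)
    then show "\<exists>p0\<in>init A. \<exists>qf\<in>final A. \<exists>q0 q b.
        run_on (\<lambda>j. consistent_letter K \<rho> i (Suc (length \<rho>) - j)) (rev_nfa A) q0 (Suc (length \<rho>) - i)
          (length \<rho>) p0 \<and>
        consistent_letter K \<rho> i i b \<and> (q0, b, q) \<in> trans A \<and> run_on (consistent_letter K \<rho> i) A q i (length \<rho>) qf"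
      unfolding guesses_def sat using past fut by blast
  next
    assume "\<exists>p0\<in>init A. \<exists>qf\<in>final A. \<exists>q0 q b.
        run_on (\<lambda>j. consistent_letter K \<rho> i (Suc (length \<rho>) - j)) (rev_nfa A) q0 (Suc (length \<rho>) - i)
          (length \<rho>) p0 \<and>
        consistent_letter K \<rho> i i b \<and> (q0, b, q) \<in> trans A \<and> run_on (consistent_letter K \<rho> i) A q i (length \<rho>) qf"
    then obtain p0 qf q0 q b where runs: "p0 \<in> init A" "qf \<in> final A"
        "run_on (\<lambda>j. consistent_letter K \<rho> i (Suc (length \<rho>) - j)) (rev_nfa A) q0 (Suc (length \<rho>) - i)
          (length \<rho>) p0"
        "consistent_letter K \<rho> i i b" "(q0, b, q) \<in> trans A" "run_on (consistent_letter K \<rho> i) A q i (length \<rho>) qf"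
      by blast
    then obtain bp bf where "bp \<in> block_lists K (nfa_states A)" "last (q0 # map snd bp) = p0"
        "bf \<in> block_lists K (nfa_states A)" "last (q # map snd bf) = qf"
        "sat (anchored_fm sl A (q0, q, bp, bf)) \<rho> i"
      unfolding sat using past fut by blast
    moreover have "q0 \<in> nfa_states A" "q \<in> nfa_states A" using trans_nfa_states[OF runs(5)] by auto
    ultimately show "\<exists>c\<in>guesses K A. sat (anchored_fm sl A c) \<rho> i"
      using runs(1,2) unfolding guesses_def by blast
  qed
qed

theorem lemma4:
  fixes Sig :: "'a set" and K :: "intv set" and A :: "('q, 'a isym set) nfa"
  assumes "finite Sig"
    and "finite K"
    and "nfa_wf (Pow (IProp ` Sig \<union> IItv ` K \<union> {Anch})) A"
    and "lang A \<subseteq> {\<kappa>. interval_word Sig K \<kappa>}"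
  shows "\<exists>\<phi> :: 'a fm. wf_fm Sig \<phi> \<and>
           (\<forall>\<rho> i. timed_word Sig \<rho> \<longrightarrow> i \<in> dom_tw \<rho> \<longrightarrow>
              (sat \<phi> \<rho> i \<longleftrightarrow> (\<rho>, i) \<in> Time K (lang A)))"
proof -
  obtain sl where sl: "set sl = Sig" using finite_list[OF assms(1)] by blast
  obtain cs where cs: "set cs = guesses K A" using finite_list[OF finite_guesses[OF assms(3,2)]] by blast
  have "finite (trans A)" using assms(3) unfolding nfa_wf_def by blast
  then have "wf_fm Sig (fm_disj (map (anchored_fm sl A) cs))"
    using wf_anchored_fm[OF sl] by (intro wf_fm_disj) auto
  moreover have "sat (fm_disj (map (anchored_fm sl A) cs)) \<rho> i \<longleftrightarrow> (\<rho>, i) \<in> Time K (lang A)"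
    if "timed_word Sig \<rho>" "i \<in> dom_tw \<rho>" for \<rho> i
    using ex_sat_anchored_fm_iff_Time[of K sl A] assms(2-4) that cs
    unfolding sat_fm_disj sl by auto
  ultimately show ?thesis by blast
qed

end
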